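(* Let $N\ge3$ and let $\varphi_1',\dots,\varphi_{N-1}'\in\mathbb R$ with $\sum_{j=1}^{N-1}\varphi_j'\equiv\pi/2\pmod{2\pi}$. Take $X_j=\sigma_x$, $X_j'=\cos\varphi_j'\sigma_x+\sin\varphi_j'\sigma_y$ for $j=1,\dots,N-1$, and $X_N=(\sigma_x-\sigma_y)/\sqrt2$, $X_N'=(\sigma_x+\sigma_y)/\sqrt2$; let $I^N_{CHSH}=\sum_{a,b\in\{0,1\}}(-1)^{ab}\mathbb A_a\otimes\mathbb B_b$. Then for every subset $K\subseteq\{1,\dots,N-1\}$ satisfying $\sum_{k\in K}\varphi_k'\equiv0\pmod\pi$, the state $\bigotimes_{k\in K}\sigma_x^{(k)}|G\rangle$ is an eigenvector of $I^N_{CHSH}$ with eigenvalue $2\sqrt2$ (in particular, for $K=\emptyset$, $I^N_{CHSH}|G\rangle=2\sqrt2|G\rangle$). Moreover, for no subset $K$ do both $K$ and its complement $\{1,\dots,N-1\}\setminus K$ satisfy this condition, so at most $2^{N-2}$ subsets $K$ satisfy it.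
   Context: $|G\rangle=\frac{1}{\sqrt2}(|0\cdots0\rangle+|1\cdots1\rangle)$ is the $N$-qubit GHZ state; $\sigma_x,\sigma_y,\sigma_z$ are Pauli matrices and $\sigma_x^{(k)}$ denotes $\sigma_x$ acting on the $k$-th qubit. $\mathbb A_0=\bigotimes_{j=1}^{N-1}X_j$, $\mathbb A_1=\bigotimes_{j=1}^{N-1}X_j'$ act on qubits $1,\dots,N-1$, and $\mathbb B_0=X_N$, $\mathbb B_1=X_N'$ act on qubit $N$. *)

theory Defs
  imports "HOL-Analysis.Analysis"
begin

text \<open>Single-qubit operators as 2x2 complex matrices indexed by the basis
  (False = |0>, True = |1>); entry M a b = <a|M|b>.\<close>
type_synonym qmat = "bool \<Rightarrow> bool \<Rightarrow> complex"

text \<open>N-qubit states: amplitudes on bit strings (lists of length N);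
  position j-1 of the list is the j-th qubit (j = 1..N).\<close>
type_synonym qstate = "bool list \<Rightarrow> complex"

definition id2 :: qmat where "id2 a b = (if a = b then 1 else 0)"
definition sigma_x :: qmat where "sigma_x a b = (if a \<noteq> b then 1 else 0)"
definition sigma_y :: qmat where
  "sigma_y a b = (if a = b then 0 else if a then \<i> else - \<i>)"

definition prod_op :: "nat \<Rightarrow> (nat \<Rightarrow> qmat) \<Rightarrow> qstate \<Rightarrow> qstate" where
  "prod_op N M psi x =
     (if length x = N then
        (\<Sum>y\<in>{ys::bool list. length ys = N}.
           (\<Prod>j\<in>{1..N}. M j (x ! (j - 1)) (y ! (j - 1))) * psi y)
      else 0)"

definition ghz :: "nat \<Rightarrow> qstate" where
  "ghz N x = (if x = replicate N False \<or> x = replicate N True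
              then complex_of_real (1 / sqrt 2) else 0)"

definition Xrot :: "real \<Rightarrow> qmat" where
  "Xrot phi a b = complex_of_real (cos phi) * sigma_x a b + complex_of_real (sin phi) * sigma_y a b"

definition XN0 :: qmat where
  "XN0 a b = (sigma_x a b - sigma_y a b) / complex_of_real (sqrt 2)"
definition XN1 :: qmat where
  "XN1 a b = (sigma_x a b + sigma_y a b) / complex_of_real (sqrt 2)"

definition chsh_local :: "nat \<Rightarrow> (nat \<Rightarrow> real) \<Rightarrow> nat \<Rightarrow> nat \<Rightarrow> nat \<Rightarrow> qmat" where
  "chsh_local N phi a b j =
     (if j < N then (if a = 0 then sigma_x else Xrot (phi j))
      else (if b = 0 then XN0 else XN1))"

definition chsh_op :: "nat \<Rightarrow> (nat \<Rightarrow> real) \<Rightarrow> qstate \<Rightarrow> qstate" where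
  "chsh_op N phi psi x =
     (\<Sum>a\<in>{0,1::nat}. \<Sum>b\<in>{0,1::nat}.
        (-1) ^ (a * b) * prod_op N (chsh_local N phi a b) psi x)"

definition flipped_ghz :: "nat \<Rightarrow> nat set \<Rightarrow> qstate" where
  "flipped_ghz N K = prod_op N (\<lambda>j. if j \<in> K then sigma_x else id2) (ghz N)"

definition zero_mod_pi :: "(nat \<Rightarrow> real) \<Rightarrow> nat set \<Rightarrow> bool" where
  "zero_mod_pi phi K = (\<exists>m::int. (\<Sum>k\<in>K. phi k) = of_int m * pi)"

end

theory Submission
  imports Defs
begin

text \<open>Every local operator involved has exactly one nonzero entry per row: sigma_x, Xrot,
  XN0 and XN1 flip the qubit, and the identity keeps it. Hence each tensor product maps a
  basis string x to a single string, and the CHSH operator acts as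
  (I psi)(x) = c(x) psi(not x). On the flipped GHZ state, supported on the string s_K of K
  and its negation, the local phases multiply to cis(2 sum_K phi - sum phi) = -i, so that
  c(s_K) = (1 - i) XN0 + (1 + i) XN1 evaluated at the last qubit, which is 2 sqrt 2.
  If both K and its complement had sum 0 mod pi, the total sum would be too, contradicting
  pi/2 mod 2 pi; so the admissible K contain no complementary pair, and there are at most
  half of the 2^(N-1) subsets.\<close>

lemma finite_bool_lists_length: "finite {ys::bool list. length ys = N}"
  using finite_lists_length_eq[of "UNIV::bool set" N] by simp

lemma prod_op_single_entry_rows:
  assumes len: "length x = N"
    and M: "\<And>j a b. j \<in> {1..N} \<Longrightarrow> M j a b = (if b = (a \<noteq> t j) then w j a else 0)"
  shows "prod_op N M psi x
           = (\<Prod>j\<in>{1..N}. w j (x!(j-1))) * psi (map (\<lambda>i. x!i \<noteq> t (Suc i)) [0..<N])"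
proof -
  define y0 where "y0 = map (\<lambda>i. x!i \<noteq> t (Suc i)) [0..<N]"
  define W where "W = (\<Prod>j\<in>{1..N}. w j (x!(j-1)))"
  have len_y0: "length y0 = N" by (simp add: y0_def)
  have y0_nth: "y0!(j-1) = (x!(j-1) \<noteq> t j)" if "j \<in> {1..N}" for j
    using that by (auto simp: y0_def)
  have entry: "(\<Prod>j\<in>{1..N}. M j (x!(j-1)) (y!(j-1))) * psi y = (if y = y0 then W * psi y0 else 0)"
    if len_y: "length y = N" for y
  proof (cases "y = y0")
    case True
    then show ?thesis using M y0_nth by (auto simp: W_def intro!: prod.cong)
  next
    case False
    then obtain i where i: "i < N" "y!i \<noteq> y0!i"
      using len_y len_y0 by (auto simp: list_eq_iff_nth_eq)
    then have "Suc i \<in> {1..N}" "M (Suc i) (x!(Suc i - 1)) (y!(Suc i - 1)) = 0"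
      using M y0_nth[of "Suc i"] by auto
    then have "(\<Prod>j\<in>{1..N}. M j (x!(j-1)) (y!(j-1))) = 0"
      by (intro prod_zero) (simp, metis)
    then show ?thesis using False by simp
  qed
  have "prod_op N M psi x = (\<Sum>y\<in>{ys::bool list. length ys = N}. if y = y0 then W * psi y0 else 0)"
    unfolding prod_op_def using len entry by (auto intro!: sum.cong)
  also have "\<dots> = W * psi y0"
    using finite_bool_lists_length len_y0 by simp
  finally show ?thesis by (simp add: W_def y0_def)
qed

definition indicator_string :: "nat \<Rightarrow> nat set \<Rightarrow> bool list" where
  "indicator_string N K = map (\<lambda>i. Suc i \<in> K) [0..<N]"

lemma flipped_ghz_eq:
  "flipped_ghz N K x =
     (if x = indicator_string N K \<or> x = map Not (indicator_string N K)
      then complex_of_real (1 / sqrt 2) else 0)"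
proof (cases "length x = N")
  case False
  then show ?thesis by (auto simp: flipped_ghz_def prod_op_def indicator_string_def)
next
  case True
  define y where "y = map (\<lambda>i. x!i \<noteq> (Suc i \<in> K)) [0..<N]"
  have "flipped_ghz N K x = (\<Prod>j\<in>{1..N}. 1) * ghz N y"
    unfolding flipped_ghz_def y_def
    by (rule prod_op_single_entry_rows[OF True]) (auto simp: id2_def sigma_x_def)
  moreover have "(y = replicate N False) = (x = indicator_string N K)"
    and "(y = replicate N True) = (x = map Not (indicator_string N K))"
    using True by (auto simp: y_def list_eq_iff_nth_eq indicator_string_def)
  ultimately show ?thesis by (simp add: ghz_def)
qed

lemma flipped_ghz_map_Not: "flipped_ghz N K (map Not x) = flipped_ghz N K x"
proof -
  have "map Not (map Not y) = y" for y by (simp add: comp_def)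
  then show ?thesis unfolding flipped_ghz_eq by metis
qed

lemma chsh_local_single_entry_rows:
  "chsh_local N phi a b j c d = (if d = (c \<noteq> True) then chsh_local N phi a b j c (\<not> c) else 0)"
  by (cases c; cases d)
     (auto simp: chsh_local_def sigma_x_def sigma_y_def Xrot_def XN0_def XN1_def)

lemma prod_op_chsh_local:
  assumes "length x = N"
  shows "prod_op N (chsh_local N phi a b) psi x =
    (\<Prod>j\<in>{1..N}. chsh_local N phi a b j (x!(j-1)) (\<not> x!(j-1))) * psi (map Not x)"
proof -
  have "map (\<lambda>i. x!i \<noteq> True) [0..<N] = map Not x"
    using assms by (simp add: list_eq_iff_nth_eq)
  moreover have "prod_op N (chsh_local N phi a b) psi x =
    (\<Prod>j\<in>{1..N}. chsh_local N phi a b j (x!(j-1)) (\<not> x!(j-1)))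
      * psi (map (\<lambda>i. x!i \<noteq> True) [0..<N])"
    by (rule prod_op_single_entry_rows[OF assms]) (rule chsh_local_single_entry_rows)
  ultimately show ?thesis by simp
qed

lemma chsh_op_eq:
  fixes phi :: "nat \<Rightarrow> real"
  assumes "length x = N" "N \<ge> 1"
  defines "P \<equiv> (\<Prod>j\<in>{1..N-1}. Xrot (phi j) (x!(j-1)) (\<not> x!(j-1)))"
  shows "chsh_op N phi psi x =
    ((1 + P) * XN0 (x!(N-1)) (\<not> x!(N-1)) + (1 - P) * XN1 (x!(N-1)) (\<not> x!(N-1)))
      * psi (map Not x)"
proof -
  have last: "{1..N} = insert N {1..N-1}" using assms(2) by auto
  have split_last: "(\<Prod>j\<in>{1..N}. chsh_local N phi a b j (x!(j-1)) (\<not> x!(j-1))) =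
     (\<Prod>j\<in>{1..N-1}. chsh_local N phi a b j (x!(j-1)) (\<not> x!(j-1)))
       * chsh_local N phi a b N (x!(N-1)) (\<not> x!(N-1))" for a b
    unfolding last by (subst prod.insert) auto
  have setting0: "(\<Prod>j\<in>{1..N-1}. chsh_local N phi 0 b j (x!(j-1)) (\<not> x!(j-1))) = 1" for b
    by (rule prod.neutral) (auto simp: chsh_local_def sigma_x_def)
  have setting1: "(\<Prod>j\<in>{1..N-1}. chsh_local N phi 1 b j (x!(j-1)) (\<not> x!(j-1))) = P" for b
    unfolding P_def by (rule prod.cong) (auto simp: chsh_local_def)
  have "chsh_local N phi a 0 N = XN0" "chsh_local N phi a 1 N = XN1" for a
    by (simp_all add: chsh_local_def)
  then show ?thesis
    unfolding chsh_op_def prod_op_chsh_local[OF assms(1)]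
    by (simp add: split_last setting0 setting1 del: One_nat_def) (simp add: algebra_simps)
qed

lemma Xrot_off_diagonal: "Xrot p c (\<not> c) = cis (if c then p else - p)"
  by (cases c) (auto simp: Xrot_def sigma_x_def sigma_y_def complex_eq_iff)

lemma prod_Xrot_off_diagonal:
  "finite A \<Longrightarrow> (\<Prod>j\<in>A. Xrot (phi j) (c j) (\<not> c j)) = cis (\<Sum>j\<in>A. if c j then phi j else - phi j)"
  by (induct rule: finite_induct) (simp_all add: Xrot_off_diagonal cis_mult)

lemma sum_signed_subset:
  assumes "finite A" "K \<subseteq> A"
  shows "(\<Sum>j\<in>A. if j \<in> K then f j else - f j) = 2 * (\<Sum>j\<in>K. f j) - (\<Sum>j\<in>A. f j :: real)"
proof -
  have "(\<Sum>j\<in>A. if j \<in> K then f j else - f j) = (\<Sum>j\<in>A. 2 * (if j \<in> K then f j else 0) - f j)"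
    by (rule sum.cong) auto
  also have "\<dots> = 2 * (\<Sum>j\<in>A. if j \<in> K then f j else 0) - (\<Sum>j\<in>A. f j)"
    by (simp add: sum_subtractf sum_distrib_left)
  finally show ?thesis
    using sum.inter_restrict[OF assms(1), of f K] assms(2) by (simp add: inf.absorb2)
qed

lemma XN_combination_False:
  "(1 - \<i>) * XN0 False True + (1 + \<i>) * XN1 False True = complex_of_real (2 * sqrt 2)"
  by (simp add: XN0_def XN1_def sigma_x_def sigma_y_def complex_eq_iff field_simps)

lemma XN_combination_True:
  "(1 + \<i>) * XN0 True False + (1 - \<i>) * XN1 True False = complex_of_real (2 * sqrt 2)"
  by (simp add: XN0_def XN1_def sigma_x_def sigma_y_def complex_eq_iff field_simps)

lemma cis_signed_sum_zero_mod_pi: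
  assumes "finite A" "K \<subseteq> A"
    and total: "(\<Sum>j\<in>A. phi j) = pi / 2 + 2 * pi * of_int m"
    and zero: "zero_mod_pi phi K"
  shows "cis (\<Sum>j\<in>A. if j \<in> K then phi j else - phi j) = - \<i>"
proof -
  obtain n where n: "(\<Sum>k\<in>K. phi k) = of_int n * pi" using zero zero_mod_pi_def by auto
  have "(\<Sum>j\<in>A. if j \<in> K then phi j else - phi j) = - (pi / 2) + 2 * pi * of_int (n - m)"
    using sum_signed_subset[OF assms(1,2), of phi] n total by (simp add: algebra_simps)
  then have "cis (\<Sum>j\<in>A. if j \<in> K then phi j else - phi j)
               = cis (- (pi / 2)) * cis (2 * pi * of_int (n - m))"
    by (simp only: cis_mult)
  then show ?thesis by simp
qed

lemma chsh_op_flipped_ghz: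
  assumes N: "N \<ge> 1" and K: "K \<subseteq> {1..N-1}"
    and total: "(\<Sum>j\<in>{1..N-1}. phi j) = pi / 2 + 2 * pi * of_int m"
    and zero: "zero_mod_pi phi K"
  shows "chsh_op N phi (flipped_ghz N K) = (\<lambda>x. complex_of_real (2 * sqrt 2) * flipped_ghz N K x)"
proof
  fix x
  define s where "s = indicator_string N K"
  have len_s: "length s = N" by (simp add: s_def indicator_string_def)
  have s_nth: "s!(j-1) = (j \<in> K)" if "j \<in> {1..N-1}" for j
    using that by (auto simp: s_def indicator_string_def)
  have s_last: "s!(N-1) = False" using N K by (auto simp: s_def indicator_string_def)
  define \<theta> where "\<theta> = (\<Sum>j\<in>{1..N-1}. if j \<in> K then phi j else - phi j)"
  have cis_\<theta>: "cis \<theta> = - \<i>"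
    unfolding \<theta>_def using cis_signed_sum_zero_mod_pi[OF _ K total zero] by simp
  then have cis_minus_\<theta>: "cis (- \<theta>) = \<i>" using cis_cnj[of \<theta>] by simp
  have phases_s: "(\<Prod>j\<in>{1..N-1}. Xrot (phi j) (s!(j-1)) (\<not> s!(j-1))) = cis \<theta>"
    unfolding \<theta>_def prod_Xrot_off_diagonal[OF finite_atLeastAtMost]
    using s_nth by (intro arg_cong[where f=cis] sum.cong) auto
  have phases_not_s: "(\<Prod>j\<in>{1..N-1}. Xrot (phi j) (map Not s!(j-1)) (\<not> map Not s!(j-1))) = cis (- \<theta>)"
    unfolding \<theta>_def prod_Xrot_off_diagonal[OF finite_atLeastAtMost] sum_negf[symmetric]
    using s_nth len_s by (intro arg_cong[where f=cis] sum.cong) auto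
  have not_s_last: "map Not s!(N-1) = True" using s_last len_s N by simp
  show "chsh_op N phi (flipped_ghz N K) x = complex_of_real (2 * sqrt 2) * flipped_ghz N K x"
  proof (cases "length x = N")
    case False
    then show ?thesis using len_s by (auto simp: flipped_ghz_eq s_def[symmetric] chsh_op_def prod_op_def)
  next
    case True
    note chsh = chsh_op_eq[OF True N, of phi "flipped_ghz N K", unfolded flipped_ghz_map_Not]
    consider "x = s" | "x = map Not s" | "x \<noteq> s" "x \<noteq> map Not s" by blast
    then show ?thesis
    proof cases
      case 1
      then show ?thesis using chsh XN_combination_False phases_s cis_\<theta> s_last by simp
    next
      case 2
      then show ?thesis using chsh XN_combination_True phases_not_s cis_minus_\<theta> not_s_last by simp
    qed (simp add: chsh flipped_ghz_eq s_def)
  qed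
qed

lemma flipped_ghz_nonzero: "flipped_ghz N K \<noteq> (\<lambda>_. 0)"
proof -
  have "flipped_ghz N K (indicator_string N K) \<noteq> 0" by (simp add: flipped_ghz_eq)
  then show ?thesis by metis
qed

lemma not_zero_mod_pi_subset_and_complement:
  assumes "K \<subseteq> A" "finite A" and total: "(\<Sum>j\<in>A. phi j) = pi / 2 + 2 * pi * of_int m"
  shows "\<not> (zero_mod_pi phi K \<and> zero_mod_pi phi (A - K))"
proof
  assume "zero_mod_pi phi K \<and> zero_mod_pi phi (A - K)"
  then obtain n n' where n: "(\<Sum>k\<in>K. phi k) = of_int n * pi"
    and n': "(\<Sum>k\<in>A - K. phi k) = of_int n' * pi"
    unfolding zero_mod_pi_def by blast
  have "(\<Sum>j\<in>A. phi j) = (\<Sum>k\<in>A - K. phi k) + (\<Sum>k\<in>K. phi k)"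
    using sum.subset_diff[OF assms(1,2)] by simp
  then have "real_of_int (2 * n' + 2 * n - 1 - 4 * m) * pi = 0"
    using n n' total by (simp add: algebra_simps)
  then have "2 * n' + 2 * n - 1 - 4 * m = 0" by simp
  then show False by presburger
qed

lemma card_family_without_complements:
  assumes "finite A" "S \<subseteq> Pow A" and no_complement: "\<And>K. K \<in> S \<Longrightarrow> A - K \<notin> S"
  shows "2 * card S \<le> 2 ^ card A"
proof -
  define T where "T = (\<lambda>K. A - K) ` S"
  have "inj_on (\<lambda>K. A - K) S" using assms(2) by (intro inj_onI) auto
  then have card_T: "card T = card S" unfolding T_def by (rule card_image)
  have "S \<inter> T = {}" using no_complement assms(2) by (auto simp: T_def double_diff)
  moreover have "finite S" "finite T"
    using assms(1,2) by (auto simp: T_def intro: finite_subset)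
  ultimately have "card S + card T = card (S \<union> T)" by (simp add: card_Un_disjoint)
  also have "\<dots> \<le> card (Pow A)"
    using assms(1,2) by (intro card_mono) (auto simp: T_def)
  finally have "card S + card T \<le> card (Pow A)" .
  then show ?thesis using card_T assms(1) by (simp add: card_Pow)
qed

theorem mainTheorem5:
  fixes N :: nat and phi :: "nat \<Rightarrow> real"
  assumes "N \<ge> 3"
    and "\<exists>m::int. (\<Sum>j\<in>{1..N-1}. phi j) = pi / 2 + 2 * pi * of_int m"
  shows "(\<forall>K. K \<subseteq> {1..N-1} \<and> zero_mod_pi phi K \<longrightarrow>
            flipped_ghz N K \<noteq> (\<lambda>_. 0) \<and>
            chsh_op N phi (flipped_ghz N K) =
              (\<lambda>x. complex_of_real (2 * sqrt 2) * flipped_ghz N K x))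
      \<and> (\<forall>K. K \<subseteq> {1..N-1} \<longrightarrow>
            \<not> (zero_mod_pi phi K \<and> zero_mod_pi phi ({1..N-1} - K)))
      \<and> card {K. K \<subseteq> {1..N-1} \<and> zero_mod_pi phi K} \<le> 2 ^ (N - 2)"
proof -
  obtain m where total: "(\<Sum>j\<in>{1..N-1}. phi j) = pi / 2 + 2 * pi * of_int m"
    using assms(2) by blast
  have N: "N \<ge> 1" using assms(1) by simp
  have no_pair: "\<forall>K. K \<subseteq> {1..N-1} \<longrightarrow> \<not> (zero_mod_pi phi K \<and> zero_mod_pi phi ({1..N-1} - K))"
    using not_zero_mod_pi_subset_and_complement[OF _ _ total] by simp
  have "2 * card {K. K \<subseteq> {1..N-1} \<and> zero_mod_pi phi K} \<le> 2 ^ card {1..N-1}"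
    using no_pair by (intro card_family_without_complements) (auto simp: double_diff)
  moreover have "card {1..N-1} = Suc (N - 2)" using assms(1) by simp
  ultimately show ?thesis
    using chsh_op_flipped_ghz[OF N _ total] flipped_ghz_nonzero no_pair by simp
qed

end
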